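(* Let $\nu\in\mathbb{N}$, let $(X,d)$ be a $\nu$-generalized metric space, and let $\{x_n\}_{n\in\mathbb{N}}$ be a sequence in $X$ whose terms $x_n$ $(n\in\mathbb{N})$ are pairwise distinct. Suppose that for every $\epsilon>0$ and for any two subsequences $\{x_{p_i}\}$ and $\{x_{q_i}\}$ of $\{x_n\}$, if $\limsup_{i\to\infty} d(x_{p_i},x_{q_i})\le\epsilon$, then there is $N$ such that $d(x_{p_i+1},x_{q_i+1})\le\epsilon$ for all $i\ge N$. If $d(x_n,x_{n+1})\to0$ as $n\to\infty$, then $\{x_n\}$ is $\nu$-Cauchy.
   Context: Let $X$ be a nonempty set, $d:X\times X\to[0,\infty)$, and $\nu\in\mathbb{N}$. $(X,d)$ is a $\nu$-generalized metric space if: (1) $d(x,y)=0$ iff $x=y$; (2) $d(x,y)=d(y,x)$ for all $x,y$; (3) $d(x,y)\le d(x,u_1)+d(u_1,u_2)+\dots+d(u_\nu,y)$ for every set $\{x,u_1,\dots,u_\nu,y\}$ of $\nu+2$ pairwise distinct elements of $X$. For $k\in\mathbb{N}$, a sequence $\{x_n\}$ in $X$ is $k$-Cauchy if $\lim_{n\to\infty}\sup\{d(x_n,x_{n+1+mk}): m\in\mathbb{Z}^+\}=0$, where $\mathbb{Z}^+$ denotes the nonnegative integers. A subsequence $\{x_{p_i}\}$ means $p_1<p_2<\cdots$ in $\mathbb{N}$. *)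

theory Defs
  imports "HOL-Analysis.Analysis"
begin

definition path_len :: "('a \<Rightarrow> 'a \<Rightarrow> real) \<Rightarrow> 'a list \<Rightarrow> real" where
  "path_len d p = (\<Sum>i<length p - 1. d (p ! i) (p ! Suc i))"

definition gen_metric_space :: "nat \<Rightarrow> 'a set \<Rightarrow> ('a \<Rightarrow> 'a \<Rightarrow> real) \<Rightarrow> bool" where
  "gen_metric_space \<nu> X d \<longleftrightarrow> X \<noteq> {} \<and>
     (\<forall>x\<in>X. \<forall>y\<in>X. d x y \<ge> 0) \<and>
     (\<forall>x\<in>X. \<forall>y\<in>X. d x y = 0 \<longleftrightarrow> x = y) \<and>
     (\<forall>x\<in>X. \<forall>y\<in>X. d x y = d y x) \<and>
     (\<forall>x\<in>X. \<forall>y\<in>X. \<forall>us. length us = \<nu> \<and> set us \<subseteq> X \<and> distinct (x # us @ [y])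
         \<longrightarrow> d x y \<le> path_len d (x # us @ [y]))"

definition k_cauchy :: "nat \<Rightarrow> ('a \<Rightarrow> 'a \<Rightarrow> real) \<Rightarrow> (nat \<Rightarrow> 'a) \<Rightarrow> bool" where
  "k_cauchy k d x \<longleftrightarrow>
     ((\<lambda>n. SUP m. ereal (d (x n) (x (n + 1 + m * k)))) \<longlonglongrightarrow> 0)"

end

theory Submission
  imports Defs
begin

text \<open>If some \<open>\<epsilon> > 0\<close> were exceeded by \<open>sup\<^sub>m d (x n) (x (n + 1 + m\<nu>))\<close> for infinitely
  many \<open>n\<close>, then, since consecutive distances tend to 0, the distances
  \<open>d (x n) (x (n + 1 + m\<nu>))\<close>, \<open>m = 0, 1, \<dots>\<close>, would cross \<open>\<epsilon>\<close> upwards for infinitely many \<open>n\<close>: \<open>d (x n) (x (n + 1 + j\<nu>)) \<le> \<epsilon> < d (x n) (x (n + 1 + (j+1)\<nu>))\<close>.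
  Take such crossings at well separated places.  The \<open>\<nu>\<close>-polygon inequality through
  \<open>x (n - 1), x n, x (n + 1 + j\<nu>)\<close> and the \<open>\<nu> - 1\<close> terms following the latter bounds the
  lim sup of \<open>d (x (n - 1)) (x (n + (j+1)\<nu>))\<close> by \<open>\<epsilon>\<close>; shifting both indices by one, the
  hypothesis then gives \<open>d (x n) (x (n + 1 + (j+1)\<nu>)) \<le> \<epsilon>\<close> eventually, contradicting the
  crossings.\<close>

lemma path_len_Cons:
  assumes "w \<noteq> []"
  shows "path_len d (u # w) = d u (hd w) + path_len d w"
proof -
  obtain v rest where "w = v # rest" using assms by (cases w) auto
  then show ?thesis unfolding path_len_def
    by (simp add: sum.lessThan_Suc_shift del: sum.lessThan_Suc)
qed

lemma path_len_map_upt: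
  "path_len d (map x [b..<b + Suc k]) = (\<Sum>j<k. d (x (b + j)) (x (b + Suc j)))"
  unfolding path_len_def by (intro sum.cong) (auto simp del: upt_Suc)

lemma gen_metric_space_nonneg:
  "gen_metric_space \<nu> X d \<Longrightarrow> u \<in> X \<Longrightarrow> v \<in> X \<Longrightarrow> 0 \<le> d u v"
  unfolding gen_metric_space_def by auto

lemma gen_metric_space_seq_polygon_ineq:
  assumes gm: "gen_metric_space \<nu> X d" and nu: "\<nu> \<ge> 1" and xX: "\<And>n. x n \<in> X"
    and inj: "inj x" and ab: "a + 1 < b"
  shows "d (x a) (x (b + \<nu> - 1)) \<le> d (x a) (x (a + 1)) + d (x (a + 1)) (x b)
           + (\<Sum>j<\<nu> - 1. d (x (b + j)) (x (b + Suc j)))"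
proof -
  obtain k where k: "\<nu> = Suc k" using nu by (cases \<nu>) auto
  define us where "us = x (a + 1) # map x [b..<b + k]"
  have polygon: "x a # us @ [x (b + \<nu> - 1)] = map x (a # (a + 1) # [b..<b + Suc k])"
    unfolding us_def k by simp
  have "length us = \<nu>" "set us \<subseteq> X" unfolding us_def k using xX by auto
  moreover have "distinct (x a # us @ [x (b + \<nu> - 1)])"
    unfolding polygon using ab
    by (auto simp: inj_eq[OF inj] distinct_map inj_on_subset[OF inj subset_UNIV])
  moreover have "\<forall>u\<in>X. \<forall>v\<in>X. \<forall>us. length us = \<nu> \<and> set us \<subseteq> X \<and> distinct (u # us @ [v])
                   \<longrightarrow> d u v \<le> path_len d (u # us @ [v])"
    using gm unfolding gen_metric_space_def by blast
  ultimately have "d (x a) (x (b + \<nu> - 1)) \<le> path_len d (x a # us @ [x (b + \<nu> - 1)])"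
    using xX[of a] xX[of "b + \<nu> - 1"] by blast
  also have "\<dots> = d (x a) (x (a + 1)) + d (x (a + 1)) (x b) + path_len d (map x [b..<b + Suc k])"
    unfolding polygon
    using path_len_Cons[of "map x ((a + 1) # [b..<b + Suc k])" d "x a"]
      path_len_Cons[of "map x [b..<b + Suc k]" d "x (a + 1)"]
    by (simp add: upt_conv_Cons del: upt_Suc)
  also have "\<dots> = d (x a) (x (a + 1)) + d (x (a + 1)) (x b)
                 + (\<Sum>j<\<nu> - 1. d (x (b + j)) (x (b + Suc j)))"
    using path_len_map_upt[of d x b k] k by (simp del: upt_Suc)
  finally show ?thesis .
qed

lemma k_cauchyI_uniform:
  assumes nonneg: "\<And>n m. 0 \<le> d (x n) (x (n + 1 + m * k))"
    and small: "\<And>\<epsilon>. \<epsilon> > 0 \<Longrightarrow> \<exists>N. \<forall>n\<ge>N. \<forall>m. d (x n) (x (n + 1 + m * k)) \<le> \<epsilon>"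
  shows "k_cauchy k d x"
proof -
  define S where "S n = (SUP m. ereal (d (x n) (x (n + 1 + m * k))))" for n
  have S_nonneg: "0 \<le> S n" for n
    unfolding S_def by (rule SUP_upper2[of 0]) (use nonneg[of n 0] in simp_all)
  have "S \<longlonglongrightarrow> 0"
  proof (rule order_tendstoI)
    fix a :: ereal assume "a < 0"
    then show "eventually (\<lambda>n. a < S n) sequentially"
      using S_nonneg by (intro always_eventually allI) (rule less_le_trans)
  next
    fix a :: ereal assume "0 < a"
    then obtain \<epsilon> where \<epsilon>: "0 < \<epsilon>" "ereal \<epsilon> < a"
      using ereal_dense2 by (metis ereal_less(2) less_trans)
    then obtain N where "\<forall>n\<ge>N. \<forall>m. d (x n) (x (n + 1 + m * k)) \<le> \<epsilon>" using small by blast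
    then have "\<forall>n\<ge>N. S n \<le> ereal \<epsilon>" unfolding S_def by (auto intro: SUP_least)
    then show "eventually (\<lambda>n. S n < a) sequentially"
      unfolding eventually_sequentially using \<epsilon>(2) by (blast intro: le_less_trans)
  qed
  then show ?thesis unfolding k_cauchy_def S_def .
qed

lemma exists_upcrossing:
  fixes f :: "nat \<Rightarrow> 'a::linorder"
  assumes "f 0 \<le> c" and "c < f m"
  shows "\<exists>j. f j \<le> c \<and> c < f (Suc j)"
  using assms(2) by (induction m) (use assms(1) not_less in auto)

lemma separated_witness_sequence:
  fixes P :: "nat \<Rightarrow> 'b \<Rightarrow> bool"
  assumes "\<And>N. \<exists>n m. N \<le> n \<and> P n m"
  shows "\<exists>n m. (\<forall>i. P (n i) (m i)) \<and> (\<forall>i. g (n i) (m i) < n (Suc i))"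
proof -
  have "\<forall>N. \<exists>w. N \<le> fst w \<and> P (fst w) (snd w)" using assms by auto
  then obtain F where F: "\<And>N. N \<le> fst (F N) \<and> P (fst (F N)) (snd (F N))"
    by (metis choice)
  define s where "s = rec_nat (F 0) (\<lambda>_ s. F (Suc (g (fst s) (snd s))))"
  have s_Suc: "s (Suc i) = F (Suc (g (fst (s i)) (snd (s i))))" for i by (simp add: s_def)
  have "P (fst (s i)) (snd (s i))" for i
    using F by (cases i) (simp_all add: s_def)
  moreover have "g (fst (s i)) (snd (s i)) < fst (s (Suc i))" for i
    using F[of "Suc (g (fst (s i)) (snd (s i)))"] by (simp add: s_Suc Suc_le_eq)
  ultimately show ?thesis by (intro exI[of _ "fst \<circ> s"] exI[of _ "snd \<circ> s"]) simp
qed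

lemma limsup_le_of_le_plus_vanishing:
  fixes f g :: "nat \<Rightarrow> real"
  assumes "\<And>i. f i \<le> c + g i" and "g \<longlonglongrightarrow> 0"
  shows "limsup (\<lambda>i. ereal (f i)) \<le> ereal c"
proof -
  have "(\<lambda>i. ereal (c + g i)) \<longlonglongrightarrow> ereal c"
    using tendsto_add[OF tendsto_const assms(2), of c] by (simp add: lim_ereal)
  then have "limsup (\<lambda>i. ereal (c + g i)) = ereal c"
    by (simp add: lim_imp_Limsup)
  moreover have "limsup (\<lambda>i. ereal (f i)) \<le> limsup (\<lambda>i. ereal (c + g i))"
    using assms(1) by (intro Limsup_mono) simp
  ultimately show ?thesis by simp
qed

lemma gen_metric_space_seq_limsup_polygon:
  assumes nu: "\<nu> \<ge> 1" and gm: "gen_metric_space \<nu> X d" and xX: "\<And>n. x n \<in> X"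
    and inj: "inj x" and lim: "(\<lambda>n. d (x n) (x (Suc n))) \<longlonglongrightarrow> 0"
    and n_pos: "\<And>i. 0 < n i"
    and below: "\<And>i. d (x (n i)) (x (n i + 1 + j i * \<nu>)) \<le> \<epsilon>"
    and sep: "\<And>i. n i + Suc (j i) * \<nu> < n (Suc i)"
  shows "limsup (\<lambda>i. ereal (d (x (n i - 1)) (x (n i + Suc (j i) * \<nu>)))) \<le> ereal \<epsilon>"
proof (rule limsup_le_of_le_plus_vanishing)
  define c where "c n = d (x n) (x (Suc n))" for n
  define b where "b i = n i + 1 + j i * \<nu>" for i
  have "strict_mono b"
  proof (unfold strict_mono_Suc_iff, intro allI)
    fix i
    have "b i \<le> n i + Suc (j i) * \<nu>" using nu by (simp add: b_def)
    also have "\<dots> < n (Suc i)" by (rule sep)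
    also have "\<dots> < b (Suc i)" by (simp add: b_def)
    finally show "b i < b (Suc i)" .
  qed
  have "strict_mono (\<lambda>i. n i - 1)"
    unfolding strict_mono_Suc_iff using sep n_pos
    by (metis Suc_pred diff_Suc_1 Suc_less_eq add_lessD1)
  show "d (x (n i - 1)) (x (n i + Suc (j i) * \<nu>))
          \<le> \<epsilon> + (c (n i - 1) + (\<Sum>k<\<nu> - 1. c (b i + k)))" for i
  proof -
    have "n i - 1 + 1 = n i" "Suc (n i - 1) = n i" "n i + Suc (j i) * \<nu> = b i + \<nu> - 1"
      using n_pos[of i] nu by (auto simp: b_def)
    then show ?thesis
      using gen_metric_space_seq_polygon_ineq[OF gm nu xX inj, of "n i - 1" "b i"] below[of i]
      unfolding c_def by (simp add: b_def add_ac)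
  qed
  have "c \<longlonglongrightarrow> 0" using lim unfolding c_def .
  moreover have "strict_mono (\<lambda>i. b i + k)" for k
    using \<open>strict_mono b\<close> by (simp add: strict_mono_def)
  ultimately show "(\<lambda>i. c (n i - 1) + (\<Sum>k<\<nu> - 1. c (b i + k))) \<longlonglongrightarrow> 0"
    using LIMSEQ_subseq_LIMSEQ[of c 0] \<open>strict_mono (\<lambda>i. n i - 1)\<close>
    by (auto intro!: tendsto_add_zero tendsto_null_sum simp: o_def)
qed

lemma gen_metric_space_seq_uniform_tail:
  assumes nu: "\<nu> \<ge> 1" and gm: "gen_metric_space \<nu> X d" and xX: "\<And>n. x n \<in> X"
    and inj: "inj x"
    and hyp: "\<And>\<epsilon> p q. \<epsilon> > 0 \<Longrightarrow> strict_mono p \<Longrightarrow> strict_mono q \<Longrightarrow>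
           limsup (\<lambda>i. ereal (d (x (p i)) (x (q i)))) \<le> ereal \<epsilon> \<Longrightarrow>
           \<exists>N. \<forall>i\<ge>N. d (x (p i + 1)) (x (q i + 1)) \<le> \<epsilon>"
    and lim: "(\<lambda>n. d (x n) (x (Suc n))) \<longlonglongrightarrow> 0"
    and \<epsilon>: "\<epsilon> > 0"
  shows "\<exists>N. \<forall>n\<ge>N. \<forall>m. d (x n) (x (n + 1 + m * \<nu>)) \<le> \<epsilon>"
proof (rule ccontr)
  assume "\<not> ?thesis"
  then have bad: "\<exists>n\<ge>N. \<exists>m. \<epsilon> < d (x n) (x (n + 1 + m * \<nu>))" for N
    by (auto simp: not_le)
  obtain N1 where N1: "\<And>n. N1 \<le> n \<Longrightarrow> d (x n) (x (Suc n)) \<le> \<epsilon>"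
    using LIMSEQ_D[OF lim \<epsilon>] by (metis abs_le_D1 less_imp_le real_norm_def diff_zero)
  have witnesses: "\<exists>n j. N \<le> n \<and> N1 < n \<and> d (x n) (x (n + 1 + j * \<nu>)) \<le> \<epsilon>
              \<and> \<epsilon> < d (x n) (x (n + 1 + Suc j * \<nu>))" for N
  proof -
    obtain n m where n: "max N (Suc N1) \<le> n" and "\<epsilon> < d (x n) (x (n + 1 + m * \<nu>))"
      using bad by blast
    moreover have "d (x n) (x (n + 1 + 0 * \<nu>)) \<le> \<epsilon>" using N1[of n] n by simp
    ultimately show ?thesis
      using exists_upcrossing[of "\<lambda>m. d (x n) (x (n + 1 + m * \<nu>))" \<epsilon> m] by auto
  qed
  obtain n j where
      crossing: "\<And>i. N1 < n i \<and> d (x (n i)) (x (n i + 1 + j i * \<nu>)) \<le> \<epsilon>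
                       \<and> \<epsilon> < d (x (n i)) (x (n i + 1 + Suc (j i) * \<nu>))"
    and sep: "\<And>i. n i + Suc (j i) * \<nu> < n (Suc i)"
    using separated_witness_sequence[where g = "\<lambda>n j. n + Suc j * \<nu>", OF witnesses] by blast
  define p where "p i = n i - 1" for i
  define q where "q i = n i + Suc (j i) * \<nu>" for i
  have p_Suc: "p i + 1 = n i" for i
    using crossing[of i] by (simp add: p_def)
  have "strict_mono p"
    unfolding strict_mono_Suc_iff p_def using sep crossing
    by (metis Suc_pred diff_Suc_1 Suc_less_eq add_lessD1 zero_less_iff_neq_zero less_nat_zero_code)
  moreover have "strict_mono q"
    unfolding strict_mono_Suc_iff q_def using sep by (meson less_le_trans le_add1)
  moreover have "limsup (\<lambda>i. ereal (d (x (p i)) (x (q i)))) \<le> ereal \<epsilon>"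
    unfolding p_def q_def using crossing sep
    by (intro gen_metric_space_seq_limsup_polygon[OF nu gm xX inj lim]) (auto intro: le_less_trans)
  ultimately obtain N where "d (x (p N + 1)) (x (q N + 1)) \<le> \<epsilon>"
    using hyp \<epsilon> by blast
  then show False
    using crossing[of N] unfolding p_Suc by (simp add: q_def add_ac)
qed

theorem lemma2p1:
  fixes \<nu> :: nat and X :: "'a set" and d :: "'a \<Rightarrow> 'a \<Rightarrow> real" and x :: "nat \<Rightarrow> 'a"
  assumes "\<nu> \<ge> 1"
    and "gen_metric_space \<nu> X d"
    and "\<And>n. x n \<in> X"
    and "inj x"
    and "\<And>\<epsilon> p q. \<epsilon> > 0 \<Longrightarrow> strict_mono p \<Longrightarrow> strict_mono q \<Longrightarrow>
           limsup (\<lambda>i. ereal (d (x (p i)) (x (q i)))) \<le> ereal \<epsilon> \<Longrightarrow>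
           \<exists>N. \<forall>i\<ge>N. d (x (p i + 1)) (x (q i + 1)) \<le> \<epsilon>"
    and "(\<lambda>n. d (x n) (x (Suc n))) \<longlonglongrightarrow> 0"
  shows "k_cauchy \<nu> d x"
proof (rule k_cauchyI_uniform)
  show "0 \<le> d (x n) (x (n + 1 + m * \<nu>))" for n m
    using gen_metric_space_nonneg[OF assms(2) assms(3) assms(3)] .
  show "\<exists>N. \<forall>n\<ge>N. \<forall>m. d (x n) (x (n + 1 + m * \<nu>)) \<le> \<epsilon>" if "\<epsilon> > 0" for \<epsilon>
    using gen_metric_space_seq_uniform_tail[OF assms that] .
qed

end
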